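(* Let $z>0$, $\zeta=(z/2)^{1/3}$. Let $(\sigma_n)_{n\in\mathbb Z}$ be functions of $z$ satisfying, for all $n\in\mathbb Z$, $$\sigma_{n+1}\sigma_{n-1}=\sqrt3\Big(z\big((\sigma_n')^2-\sigma_n\sigma_n''\big)-\sigma_n\sigma_n'\Big)\qquad(\,'=\mathrm d/\mathrm dz),$$ with $\sigma_0=\zeta^{-5/24}e^{-\frac98\zeta^4}$ and $\sigma_1=3^{1/4}\zeta^{7/24}e^{-\frac98\zeta^4-\frac32\zeta^2}$. Then for all $n\in\mathbb Z$, $$\sigma_n=\begin{cases}3^{1/4}\zeta^{7/24}e^{-\frac98\zeta^4-\frac32n\zeta^2}\rho_n(3\zeta^2),& n\text{ odd},\\ \zeta^{-5/24}e^{-\frac98\zeta^4-\frac32n\zeta^2}\rho_n(3\zeta^2),& n\text{ even},\end{cases}$$ where $\rho_n$ are the Ohyama polynomials.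
   Context: The Ohyama polynomials $\rho_n(s)$, $n\in\mathbb Z$, are defined by $\rho_0=\rho_1=\rho_{-1}=1$ and the recurrence $$(s+n)\rho_n^2-2s\rho_n\ddot\rho_n+2s(\dot\rho_n)^2-2\rho_n\dot\rho_n=\begin{cases}\rho_{n+1}\rho_{n-1},& n\text{ odd},\\ s\,\rho_{n+1}\rho_{n-1},& n\text{ even},\end{cases}$$ where dots denote $\mathrm d/\mathrm ds$ (it is known that each $\rho_n$ is a monic polynomial in $s$ with integer coefficients and $\rho_n(0)\ne0$). *)

theory Defs
  imports "HOL-Analysis.Analysis" "HOL-Computational_Algebra.Polynomial"
begin

definition ohyama_lhs :: "int \<Rightarrow> real poly \<Rightarrow> real poly" where
  "ohyama_lhs n p =
     [:of_int n, 1:] * p^2 - smult 2 ([:0, 1:] * p * pderiv (pderiv p))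
     + smult 2 ([:0, 1:] * (pderiv p)^2) - smult 2 (p * pderiv p)"

text \<open>Upward recursion: ohyama_up k = (rho_k, rho_(k+1)).
  From the recurrence at n = k+1: rho_(n+1) = lhs_n(rho_n) / rho_(n-1) (n odd),
  resp. / (s * rho_(n-1)) (n even).\<close>
fun ohyama_up :: "nat \<Rightarrow> real poly \<times> real poly" where
  "ohyama_up 0 = (1, 1)"
| "ohyama_up (Suc k) =
     (let (a, b) = ohyama_up k; n = int (Suc k)
      in (b, ohyama_lhs n b div (if odd n then a else [:0, 1:] * a)))"

text \<open>Downward recursion: ohyama_down k = (rho_(-k), rho_(-k-1)).
  From the recurrence at n = -(k+1): rho_(n-1) = lhs_n(rho_n) / rho_(n+1) (n odd),
  resp. / (s * rho_(n+1)) (n even).\<close>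
fun ohyama_down :: "nat \<Rightarrow> real poly \<times> real poly" where
  "ohyama_down 0 = (1, 1)"
| "ohyama_down (Suc k) =
     (let (a, b) = ohyama_down k; n = - int (Suc k)
      in (b, ohyama_lhs n b div (if odd n then a else [:0, 1:] * a)))"

definition ohyama :: "int \<Rightarrow> real poly" where
  "ohyama n = (if n \<ge> 0 then fst (ohyama_up (nat n)) else fst (ohyama_down (nat (- n))))"

end

theory Submission
  imports Defs "HOL-Computational_Algebra.Fundamental_Theorem_Algebra"
begin

(*
  Write \<sigma>_n(z) = g_n(\<zeta>) with \<zeta> = (z/2)^(1/3), where g_n is an explicit gauge factor times
  \<rho>_n(3\<zeta>^2). The substitution z = 2\<zeta>^3 only rescales the bilinear expression
  z ((\<sigma>')^2 - \<sigma> \<sigma>'') - \<sigma> \<sigma>', and splitting off the gauge factor turns it into the left-hand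
  side of the Ohyama recurrence. So these functions satisfy the same recurrence and initial
  data as \<sigma>; since the recurrence determines \<sigma>_(n+1) from \<sigma>_n and \<sigma>_(n-1) away from the finitely
  many zeros of \<sigma>_(n-1), continuity gives uniqueness in both directions.

  The substance is that the divisions defining \<rho>_n are exact. Along the induction one carries
  the auxiliary bilinear relation (backlund_rel, with e_n = backlund_const n)
    \<rho>_(n+2) \<rho>_(n-1) = (s + e_n) \<rho>_(n+1) \<rho>_n - 2 s (\<rho>_(n+1)' \<rho>_n - \<rho>_(n+1) \<rho>_n')
  (signs flip for negative indices). Differentiating the relations at consecutive indices
  shows that the left-hand side of the recurrence at n+3, times \<rho>_(n+1), equals c \<rho>_(n+2)
  times the right-hand side of the auxiliary relation at n+2. Consecutive \<rho>'s have no common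
  root: at a root of \<rho>_n of multiplicity m the recurrence makes \<rho>_(n+1) vanish to order 2m-2,
  while the auxiliary relation allows order at most m-1; so m = 1 and \<rho>_(n+1) does not vanish.
  Hence c \<rho>_(n+2) divides the left-hand side, and both relations hold at the next index.
*)

section \<open>One-sided Ohyama sequences\<close>

definition toda_coeff :: "nat \<Rightarrow> real poly" where
  "toda_coeff j = (if odd j then 1 else [:0, 1:])"

fun ohyama_seq :: "int \<Rightarrow> nat \<Rightarrow> real poly" where
  "ohyama_seq \<epsilon> 0 = 1"
| "ohyama_seq \<epsilon> (Suc 0) = 1"
| "ohyama_seq \<epsilon> (Suc (Suc k)) =
     ohyama_lhs (\<epsilon> * int (Suc k)) (ohyama_seq \<epsilon> (Suc k)) div (toda_coeff (Suc k) * ohyama_seq \<epsilon> k)"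

lemma ohyama_up_eq_seq: "ohyama_up k = (ohyama_seq 1 k, ohyama_seq 1 (Suc k))"
proof (induction k)
  case (Suc k)
  then show ?case by (cases k) (auto simp: toda_coeff_def Let_def)
qed simp

lemma ohyama_down_eq_seq: "ohyama_down k = (ohyama_seq (-1) k, ohyama_seq (-1) (Suc k))"
proof (induction k)
  case (Suc k)
  then show ?case by (cases k) (auto simp: toda_coeff_def Let_def)
qed simp

lemma ohyama_eq_seq:
  "ohyama n = (if n \<ge> 0 then ohyama_seq 1 (nat n) else ohyama_seq (-1) (nat (- n)))"
  by (simp add: ohyama_def ohyama_up_eq_seq ohyama_down_eq_seq)

section \<open>The Toda relation and the auxiliary bilinear relation\<close>

(* \<epsilon> j has the parity of j, so toda_coeff j is the factor of the Ohyama recurrence at n = \<epsilon> j. *)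
definition toda_rel :: "int \<Rightarrow> nat \<Rightarrow> real poly \<Rightarrow> real poly \<Rightarrow> real poly \<Rightarrow> bool" where
  "toda_rel \<epsilon> j qm q qp \<longleftrightarrow> ohyama_lhs (\<epsilon> * int j) q = toda_coeff j * qp * qm"

definition backlund_const :: "nat \<Rightarrow> real" where
  "backlund_const j = (if even j then 3 * real j + 1 else 3 * real j + 2)"

definition backlund_rhs :: "int \<Rightarrow> nat \<Rightarrow> real poly \<Rightarrow> real poly \<Rightarrow> real poly" where
  "backlund_rhs \<epsilon> j q0 q1 = [:of_int \<epsilon> * backlund_const j, 1:] * q1 * q0
      - smult (2 * of_int \<epsilon>) ([:0, 1:] * (pderiv q1 * q0 - q1 * pderiv q0))"

definition backlund_rel :: "int \<Rightarrow> nat \<Rightarrow> real poly \<Rightarrow> real poly \<Rightarrow> real poly \<Rightarrow> real poly \<Rightarrow> bool" where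
  "backlund_rel \<epsilon> j qm q0 q1 q2 \<longleftrightarrow> q2 * qm = backlund_rhs \<epsilon> j q0 q1"

lemma poly_ohyama_lhs: "poly (ohyama_lhs n p) x =
   (x + of_int n) * (poly p x)^2 - 2 * x * poly p x * poly (pderiv (pderiv p)) x
   + 2 * x * (poly (pderiv p) x)^2 - 2 * poly p x * poly (pderiv p) x"
  by (simp add: ohyama_lhs_def algebra_simps)

lemma poly_backlund_rhs: "poly (backlund_rhs \<epsilon> j q0 q1) x =
   (x + of_int \<epsilon> * backlund_const j) * poly q1 x * poly q0 x
   - 2 * of_int \<epsilon> * x * (poly (pderiv q1) x * poly q0 x - poly q1 x * poly (pderiv q0) x)"
  by (simp add: backlund_rhs_def algebra_simps)

definition logderiv :: "real poly \<Rightarrow> real \<Rightarrow> real" where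
  "logderiv q x = poly (pderiv q) x / poly q x"

definition logderiv_deriv :: "real poly \<Rightarrow> real \<Rightarrow> real" where
  "logderiv_deriv q x = poly (pderiv (pderiv q)) x / poly q x - (logderiv q x)^2"

definition toda_ratio :: "real poly \<Rightarrow> real poly \<Rightarrow> real poly \<Rightarrow> real \<Rightarrow> real" where
  "toda_ratio qm q qp x = poly qp x * poly qm x / (poly q x)^2"

definition toda_ratio_logderiv :: "real poly \<Rightarrow> real poly \<Rightarrow> real poly \<Rightarrow> real \<Rightarrow> real" where
  "toda_ratio_logderiv qm q qp x = logderiv qp x + logderiv qm x - 2 * logderiv q x"

lemma has_real_derivative_logderiv:
  "poly q x \<noteq> 0 \<Longrightarrow> (logderiv q has_real_derivative logderiv_deriv q x) (at x)"
  unfolding logderiv_def logderiv_deriv_def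
  by (rule derivative_eq_intros poly_DERIV refl | assumption)+ (simp add: field_simps power2_eq_square)

lemma has_real_derivative_toda_ratio:
  "poly q x \<noteq> 0 \<Longrightarrow> poly qm x \<noteq> 0 \<Longrightarrow> poly qp x \<noteq> 0 \<Longrightarrow>
   (toda_ratio qm q qp has_real_derivative toda_ratio qm q qp x * toda_ratio_logderiv qm q qp x) (at x)"
  unfolding toda_ratio_def toda_ratio_logderiv_def logderiv_def
  by (rule derivative_eq_intros poly_DERIV refl | simp)+
     (simp add: field_simps power2_eq_square eval_nat_numeral)

lemma ohyama_lhs_at:
  "poly q x \<noteq> 0 \<Longrightarrow> poly (ohyama_lhs n q) x =
     (poly q x)^2 * (x + of_int n - 2 * x * logderiv_deriv q x - 2 * logderiv q x)"
  unfolding poly_ohyama_lhs logderiv_def logderiv_deriv_def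
  by (simp add: field_simps power2_eq_square)

lemma backlund_rhs_at:
  "poly q0 x \<noteq> 0 \<Longrightarrow> poly q1 x \<noteq> 0 \<Longrightarrow> poly (backlund_rhs \<epsilon> j q0 q1) x =
     poly q1 x * poly q0 x * (x + of_int \<epsilon> * backlund_const j - 2 * of_int \<epsilon> * x * (logderiv q1 x - logderiv q0 x))"
  unfolding poly_backlund_rhs logderiv_def by (simp add: field_simps)

lemma toda_rel_at:
  assumes "toda_rel \<epsilon> j qm q qp" "poly q x \<noteq> 0"
  shows "poly (toda_coeff j) x * toda_ratio qm q qp x
           = x + of_int \<epsilon> * real j - 2 * x * logderiv_deriv q x - 2 * logderiv q x"
proof -
  have "poly (ohyama_lhs (\<epsilon> * int j) q) x = poly (toda_coeff j) x * poly qp x * poly qm x"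
    using assms(1) unfolding toda_rel_def by simp
  then show ?thesis
    using assms(2) unfolding ohyama_lhs_at[OF assms(2)] toda_ratio_def by (simp add: field_simps)
qed

lemma backlund_rel_at:
  assumes "backlund_rel \<epsilon> j qm q0 q1 q2" "poly qm x \<noteq> 0" "poly q0 x \<noteq> 0" "poly q1 x \<noteq> 0"
  shows "toda_ratio q0 q1 q2 x * toda_ratio qm q0 q1 x
           = x + of_int \<epsilon> * backlund_const j - 2 * of_int \<epsilon> * x * (logderiv q1 x - logderiv q0 x)"
proof -
  have "poly q2 x * poly qm x = poly (backlund_rhs \<epsilon> j q0 q1) x"
    using assms(1) unfolding backlund_rel_def by (metis poly_mult)
  then show ?thesis
    using assms(2-4) unfolding backlund_rhs_at[OF assms(3,4)] toda_ratio_def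
    by (simp add: field_simps power2_eq_square)
qed

section \<open>Propagating the relations by differentiation\<close>

lemma has_real_derivative_unique_on_open:
  assumes "open U" "x \<in> U" "\<And>y. y \<in> U \<Longrightarrow> f y = g y"
    and "(f has_real_derivative f') (at x)" "(g has_real_derivative g') (at x)"
  shows "f' = g'"
proof -
  have "(g has_real_derivative f') (at x)"
    using has_field_derivative_transform_within_open[OF assms(4,1,2)] assms(3) by auto
  with assms(5) show ?thesis using DERIV_unique by blast
qed

lemma backlund_rel_derivative:
  assumes B: "backlund_rel \<epsilon> j qm q0 q1 q2" and U: "open U" "x \<in> U"
    and nz: "\<And>y. y \<in> U \<Longrightarrow> poly qm y \<noteq> 0 \<and> poly q0 y \<noteq> 0 \<and> poly q1 y \<noteq> 0 \<and> poly q2 y \<noteq> 0"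
  shows "toda_ratio q0 q1 q2 x * toda_ratio qm q0 q1 x
           * (toda_ratio_logderiv q0 q1 q2 x + toda_ratio_logderiv qm q0 q1 x)
         = 1 - 2 * of_int \<epsilon> * (logderiv q1 x - logderiv q0 x)
             - 2 * of_int \<epsilon> * x * (logderiv_deriv q1 x - logderiv_deriv q0 x)"
proof (rule has_real_derivative_unique_on_open[OF U])
  show "toda_ratio q0 q1 q2 y * toda_ratio qm q0 q1 y
          = y + of_int \<epsilon> * backlund_const j - 2 * of_int \<epsilon> * y * (logderiv q1 y - logderiv q0 y)"
    if "y \<in> U" for y
    using backlund_rel_at[OF B] nz[OF that] by blast
  have x: "poly qm x \<noteq> 0" "poly q0 x \<noteq> 0" "poly q1 x \<noteq> 0" "poly q2 x \<noteq> 0"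
    using nz[OF U(2)] by auto
  note d1 = has_real_derivative_toda_ratio[of q1 x q0 q2] and d0 = has_real_derivative_toda_ratio[of q0 x qm q1]
  show "((\<lambda>y. toda_ratio q0 q1 q2 y * toda_ratio qm q0 q1 y) has_real_derivative
          toda_ratio q0 q1 q2 x * toda_ratio qm q0 q1 x
           * (toda_ratio_logderiv q0 q1 q2 x + toda_ratio_logderiv qm q0 q1 x)) (at x)"
    by (rule DERIV_cong[OF DERIV_mult[OF d1 d0]]) (use x in \<open>simp_all add: algebra_simps\<close>)
  show "((\<lambda>y. y + of_int \<epsilon> * backlund_const j - 2 * of_int \<epsilon> * y * (logderiv q1 y - logderiv q0 y))
          has_real_derivative 1 - 2 * of_int \<epsilon> * (logderiv q1 x - logderiv q0 x)
             - 2 * of_int \<epsilon> * x * (logderiv_deriv q1 x - logderiv_deriv q0 x)) (at x)"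
    by (rule DERIV_cong, (rule derivative_intros has_real_derivative_logderiv x)+)
       (simp add: algebra_simps)
qed

lemma toda_ratio_difference:
  assumes \<epsilon>: "\<epsilon> = 1 \<or> \<epsilon> = -1"
    and T0: "toda_rel \<epsilon> j qm q0 q1" and T1: "toda_rel \<epsilon> (Suc j) q0 q1 q2"
    and B: "backlund_rel \<epsilon> j qm q0 q1 q2" and U: "open U" "x \<in> U"
    and nz: "\<And>y. y \<in> U \<Longrightarrow> poly qm y \<noteq> 0 \<and> poly q0 y \<noteq> 0 \<and> poly q1 y \<noteq> 0 \<and> poly q2 y \<noteq> 0"
  shows "poly (toda_coeff (Suc j)) x * toda_ratio q0 q1 q2 x - poly (toda_coeff j) x * toda_ratio qm q0 q1 x
     = of_int \<epsilon> * (toda_ratio q0 q1 q2 x * toda_ratio qm q0 q1 x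
         * (toda_ratio_logderiv q0 q1 q2 x + toda_ratio_logderiv qm q0 q1 x))"
proof -
  have "poly (toda_coeff (Suc j)) x * toda_ratio q0 q1 q2 x - poly (toda_coeff j) x * toda_ratio qm q0 q1 x
      = of_int \<epsilon> - 2 * x * (logderiv_deriv q1 x - logderiv_deriv q0 x) - 2 * (logderiv q1 x - logderiv q0 x)"
    using toda_rel_at[OF T0] toda_rel_at[OF T1] nz[OF U(2)] by (simp add: algebra_simps)
  moreover note backlund_rel_derivative[OF B U nz]
  ultimately show ?thesis using \<epsilon> by (auto simp: algebra_simps)
qed

(* Pointwise core of the propagation step: t1, t2, t3 are consecutive Toda ratios, l_i their
   logarithmic derivatives, dl_i the derivatives of l_i, and e, e' consecutive differences of
   backlund_const. *)
lemma propagation_algebra: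
  fixes \<epsilon> x c1 c2 dc1 dc2 e e' t1 t2 t3 l1 l2 l3 dl2 dl3 :: real
  assumes \<epsilon>: "\<epsilon> = 1 \<or> \<epsilon> = -1" and nz: "t2 \<noteq> 0" "t3 \<noteq> 0" "x \<noteq> 0"
    and parity: "(c1 = x \<and> c2 = 1 \<and> dc1 = 1 \<and> dc2 = 0 \<and> e = 4 \<and> e' = 2) \<or>
                 (c1 = 1 \<and> c2 = x \<and> dc1 = 0 \<and> dc2 = 1 \<and> e = 2 \<and> e' = 4)"
    and l3: "l3 = \<epsilon> * (c1 / t2 - c2 / t3) - l2"
    and dl3: "dl3 = \<epsilon> * (dc1 / t2 - c1 * l2 / t2 - dc2 / t3 + c2 * l3 / t3) - dl2"
    and B: "t2 * t3 - t2 * t1 = \<epsilon> * e - 2 * \<epsilon> * x * l2"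
    and dB: "t2 * t3 * (l2 + l3) - t2 * t1 * (l2 + l1) = -2 * \<epsilon> * (l2 + x * dl2)"
    and T: "c2 * t2 - c1 * t1 = \<epsilon> * t2 * t1 * (l2 + l1)"
  shows "t3 * (2 * c1 * t3 - c2 * t2 - 2 * l3 - 2 * x * dl3) = c2 * (t2 * t3 + \<epsilon> * e' - 2 * \<epsilon> * x * l3)"
proof -
  have \<epsilon>\<epsilon>: "\<epsilon> * \<epsilon> = 1" using \<epsilon> by auto
  have t1: "t1 = (t2 * t3 - \<epsilon> * e + 2 * \<epsilon> * x * l2) / t2" using B nz by (simp add: field_simps)
  have T': "t2 * t1 * (l2 + l1) = \<epsilon> * (c2 * t2 - c1 * t1)"
    using T \<epsilon>\<epsilon> by (metis mult.assoc mult.left_commute mult_1)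
  have dl2: "dl2 = (-2 * \<epsilon> * l2 - t2 * t3 * (l2 + l3) + \<epsilon> * (c2 * t2 - c1 * t1)) / (2 * \<epsilon> * x)"
    using dB T' nz \<epsilon>\<epsilon> \<epsilon> by (auto simp: field_simps)
  show ?thesis
    using \<epsilon> parity nz unfolding dl3 dl2 t1 l3
    by (auto simp: field_simps)
qed

lemma toda_ratio_logderiv_next:
  assumes \<epsilon>: "\<epsilon> = 1 \<or> \<epsilon> = -1"
    and T0: "toda_rel \<epsilon> j q0 q1 q2" and T1: "toda_rel \<epsilon> (Suc j) q1 q2 q3"
    and B: "backlund_rel \<epsilon> j q0 q1 q2 q3" and U: "open U" "x \<in> U"
    and nz: "\<And>y. y \<in> U \<Longrightarrow> poly q0 y \<noteq> 0 \<and> poly q1 y \<noteq> 0 \<and> poly q2 y \<noteq> 0 \<and> poly q3 y \<noteq> 0"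
  defines "t0 \<equiv> toda_ratio q0 q1 q2" and "t1 \<equiv> toda_ratio q1 q2 q3"
    and "l0 \<equiv> toda_ratio_logderiv q0 q1 q2" and "l1 \<equiv> toda_ratio_logderiv q1 q2 q3"
    and "c0 \<equiv> poly (toda_coeff j)" and "c1 \<equiv> poly (toda_coeff (Suc j))"
  shows "l1 x = of_int \<epsilon> * (c1 x / t0 x - c0 x / t1 x) - l0 x"
    and "logderiv_deriv q3 x + logderiv_deriv q1 x - 2 * logderiv_deriv q2 x
           = of_int \<epsilon> * ((poly (pderiv (toda_coeff (Suc j))) x * t0 x - c1 x * (t0 x * l0 x)) / (t0 x * t0 x)
               - (poly (pderiv (toda_coeff j)) x * t1 x - c0 x * (t1 x * l1 x)) / (t1 x * t1 x))
             - (logderiv_deriv q2 x + logderiv_deriv q0 x - 2 * logderiv_deriv q1 x)"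
proof -
  have t_nz: "t0 y \<noteq> 0 \<and> t1 y \<noteq> 0" if "y \<in> U" for y
    using nz[OF that] by (simp add: t0_def t1_def toda_ratio_def)
  have l1_eq: "l1 y = of_int \<epsilon> * (c1 y / t0 y - c0 y / t1 y) - l0 y" if "y \<in> U" for y
  proof -
    have "c1 y * t1 y - c0 y * t0 y = of_int \<epsilon> * (t1 y * t0 y * (l1 y + l0 y))"
      using toda_ratio_difference[OF \<epsilon> T0 T1 B U(1) that nz]
      unfolding c0_def c1_def t0_def t1_def l0_def l1_def .
    then show ?thesis using t_nz[OF that] \<epsilon> by (auto simp: field_simps)
  qed
  then show "l1 x = of_int \<epsilon> * (c1 x / t0 x - c0 x / t1 x) - l0 x" using U(2) .
  have x: "poly q0 x \<noteq> 0" "poly q1 x \<noteq> 0" "poly q2 x \<noteq> 0" "poly q3 x \<noteq> 0"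
    using nz[OF U(2)] by auto
  note d\<phi> = has_real_derivative_logderiv[OF x(1)] has_real_derivative_logderiv[OF x(2)]
    has_real_derivative_logderiv[OF x(3)] has_real_derivative_logderiv[OF x(4)]
  show "logderiv_deriv q3 x + logderiv_deriv q1 x - 2 * logderiv_deriv q2 x
           = of_int \<epsilon> * ((poly (pderiv (toda_coeff (Suc j))) x * t0 x - c1 x * (t0 x * l0 x)) / (t0 x * t0 x)
               - (poly (pderiv (toda_coeff j)) x * t1 x - c0 x * (t1 x * l1 x)) / (t1 x * t1 x))
             - (logderiv_deriv q2 x + logderiv_deriv q0 x - 2 * logderiv_deriv q1 x)"
  proof (rule has_real_derivative_unique_on_open[OF U l1_eq])
    show "(l1 has_real_derivative logderiv_deriv q3 x + logderiv_deriv q1 x - 2 * logderiv_deriv q2 x) (at x)"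
      unfolding l1_def toda_ratio_logderiv_def[abs_def]
      by (rule DERIV_cong, (rule derivative_intros d\<phi>)+) simp
    have dt: "(t0 has_real_derivative t0 x * l0 x) (at x)" "(t1 has_real_derivative t1 x * l1 x) (at x)"
      unfolding t0_def t1_def l0_def l1_def using has_real_derivative_toda_ratio x by blast+
    have dl0: "(l0 has_real_derivative logderiv_deriv q2 x + logderiv_deriv q0 x - 2 * logderiv_deriv q1 x) (at x)"
      unfolding l0_def toda_ratio_logderiv_def[abs_def]
      by (rule DERIV_cong, (rule derivative_intros d\<phi>)+) simp
    have dc: "(c0 has_real_derivative poly (pderiv (toda_coeff j)) x) (at x)"
      "(c1 has_real_derivative poly (pderiv (toda_coeff (Suc j))) x) (at x)"
      unfolding c0_def c1_def by (rule poly_DERIV)+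
    have t01: "t0 x \<noteq> 0" "t1 x \<noteq> 0" using t_nz[OF U(2)] by auto
    show "((\<lambda>y. of_int \<epsilon> * (c1 y / t0 y - c0 y / t1 y) - l0 y) has_real_derivative
           of_int \<epsilon> * ((poly (pderiv (toda_coeff (Suc j))) x * t0 x - c1 x * (t0 x * l0 x)) / (t0 x * t0 x)
               - (poly (pderiv (toda_coeff j)) x * t1 x - c0 x * (t1 x * l1 x)) / (t1 x * t1 x))
             - (logderiv_deriv q2 x + logderiv_deriv q0 x - 2 * logderiv_deriv q1 x)) (at x)"
      by (rule DERIV_cong, (rule derivative_intros DERIV_divide dc dt dl0 t01)+)
         (simp add: algebra_simps)
  qed
qed

lemma toda_coeff_cases:
  "(poly (toda_coeff j) x = x \<and> poly (toda_coeff (Suc j)) x = 1 \<and> poly (pderiv (toda_coeff j)) x = 1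
      \<and> poly (pderiv (toda_coeff (Suc j))) x = 0
      \<and> backlund_const (Suc j) - backlund_const j = 4
      \<and> backlund_const (j + 2) - backlund_const (Suc j) = 2) \<or>
   (poly (toda_coeff j) x = 1 \<and> poly (toda_coeff (Suc j)) x = x \<and> poly (pderiv (toda_coeff j)) x = 0
      \<and> poly (pderiv (toda_coeff (Suc j))) x = 1
      \<and> backlund_const (Suc j) - backlund_const j = 2
      \<and> backlund_const (j + 2) - backlund_const (Suc j) = 4)"
  by (cases "even j") (auto simp: toda_coeff_def backlund_const_def pderiv_pCons)

lemma toda_backlund_of_ratio:
  assumes "poly q3 x \<noteq> 0" "poly q4 x \<noteq> 0"
    and "(x + of_int \<epsilon> * real n - 2 * x * logderiv_deriv q4 x - 2 * logderiv q4 x) * toda_ratio q2 q3 q4 x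
           = poly c x * (x + of_int \<epsilon> * backlund_const i - 2 * of_int \<epsilon> * x * (logderiv q4 x - logderiv q3 x))"
  shows "poly (ohyama_lhs (\<epsilon> * int n) q4) x * poly q2 x = poly c x * poly q3 x * poly (backlund_rhs \<epsilon> i q3 q4) x"
proof -
  have "poly (ohyama_lhs (\<epsilon> * int n) q4) x * poly q2 x
      = poly q4 x * (poly q3 x)^2 * ((x + of_int \<epsilon> * real n - 2 * x * logderiv_deriv q4 x - 2 * logderiv q4 x)
          * toda_ratio q2 q3 q4 x)"
    unfolding ohyama_lhs_at[OF assms(2)] toda_ratio_def using assms(1) by (simp add: field_simps power2_eq_square)
  also have "\<dots> = poly c x * poly q3 x * poly (backlund_rhs \<epsilon> i q3 q4) x"
    unfolding assms(3) backlund_rhs_at[OF assms(1,2)] by (simp add: algebra_simps power2_eq_square)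
  finally show ?thesis .
qed

lemma toda_backlund_propagate_at:
  assumes \<epsilon>: "\<epsilon> = 1 \<or> \<epsilon> = -1" and U: "open U" "x \<in> U"
    and nz: "\<And>y. y \<in> U \<Longrightarrow> y > 0 \<and> poly q0 y \<noteq> 0 \<and> poly q1 y \<noteq> 0 \<and> poly q2 y \<noteq> 0
                                \<and> poly q3 y \<noteq> 0 \<and> poly q4 y \<noteq> 0"
    and T0: "toda_rel \<epsilon> j q0 q1 q2" and T1: "toda_rel \<epsilon> (Suc j) q1 q2 q3"
    and T2: "toda_rel \<epsilon> (Suc (Suc j)) q2 q3 q4"
    and B0: "backlund_rel \<epsilon> j q0 q1 q2 q3" and B1: "backlund_rel \<epsilon> (Suc j) q1 q2 q3 q4"
  shows "poly (ohyama_lhs (\<epsilon> * int (j + 3)) q4) x * poly q2 x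
           = poly (toda_coeff (j + 3)) x * poly q3 x * poly (backlund_rhs \<epsilon> (j + 2) q3 q4) x"
proof -
  define e where "e = (of_int \<epsilon> :: real)"
  define t1 t2 t3 where "t1 = toda_ratio q0 q1 q2" and "t2 = toda_ratio q1 q2 q3"
    and "t3 = toda_ratio q2 q3 q4"
  define l1 l2 l3 where "l1 = toda_ratio_logderiv q0 q1 q2" and "l2 = toda_ratio_logderiv q1 q2 q3"
    and "l3 = toda_ratio_logderiv q2 q3 q4"
  define c1 c2 where "c1 = poly (toda_coeff j)" and "c2 = poly (toda_coeff (Suc j))"
  define \<phi> \<psi> where "\<phi> = logderiv" and "\<psi> = logderiv_deriv"
  define dl2 dl3 where "dl2 = \<psi> q3 x + \<psi> q1 x - 2 * \<psi> q2 x" and "dl3 = \<psi> q4 x + \<psi> q2 x - 2 * \<psi> q3 x"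
  have c_period: "toda_coeff (Suc (Suc j)) = toda_coeff j" "toda_coeff (j + 3) = toda_coeff (Suc j)"
    by (simp_all add: toda_coeff_def)
  have nz0: "\<And>y. y \<in> U \<Longrightarrow> poly q0 y \<noteq> 0 \<and> poly q1 y \<noteq> 0 \<and> poly q2 y \<noteq> 0 \<and> poly q3 y \<noteq> 0"
    and nz1: "\<And>y. y \<in> U \<Longrightarrow> poly q1 y \<noteq> 0 \<and> poly q2 y \<noteq> 0 \<and> poly q3 y \<noteq> 0 \<and> poly q4 y \<noteq> 0"
    using nz by blast+
  have x: "x > 0" "poly q0 x \<noteq> 0" "poly q1 x \<noteq> 0" "poly q2 x \<noteq> 0" "poly q3 x \<noteq> 0" "poly q4 x \<noteq> 0"
    using nz[OF U(2)] by auto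
  note l3_facts = toda_ratio_logderiv_next[OF \<epsilon> T1 T2 B1 U nz1]
  have l3_eq: "l3 x = e * (c1 x / t2 x - c2 x / t3 x) - l2 x"
    using l3_facts(1) unfolding c_period c1_def c2_def t2_def t3_def l2_def l3_def e_def .
  have dl3_eq: "dl3 = e * ((poly (pderiv (toda_coeff j)) x * t2 x - c1 x * (t2 x * l2 x)) / (t2 x * t2 x)
        - (poly (pderiv (toda_coeff (Suc j))) x * t3 x - c2 x * (t3 x * l3 x)) / (t3 x * t3 x)) - dl2"
    using l3_facts(2) unfolding c_period c1_def c2_def t2_def t3_def l2_def l3_def e_def dl2_def dl3_def \<psi>_def .
  have t_nz: "t2 x \<noteq> 0" "t3 x \<noteq> 0"
    using x by (simp_all add: t2_def t3_def toda_ratio_def)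
  note parity = toda_coeff_cases[of j x, folded c1_def c2_def]
  have B0x: "t2 x * t1 x = x + e * backlund_const j - 2 * e * x * (\<phi> q2 x - \<phi> q1 x)"
    using backlund_rel_at[OF B0] x unfolding t1_def t2_def e_def \<phi>_def by blast
  have B1x: "t3 x * t2 x = x + e * backlund_const (Suc j) - 2 * e * x * (\<phi> q3 x - \<phi> q2 x)"
    using backlund_rel_at[OF B1] x unfolding t2_def t3_def e_def \<phi>_def by blast
  have dB0: "t2 x * t1 x * (l2 x + l1 x)
               = 1 - 2 * e * (\<phi> q2 x - \<phi> q1 x) - 2 * e * x * (\<psi> q2 x - \<psi> q1 x)"
    using backlund_rel_derivative[OF B0 U nz0] unfolding t1_def t2_def l1_def l2_def e_def \<phi>_def \<psi>_def .
  have dB1: "t3 x * t2 x * (l3 x + l2 x)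
               = 1 - 2 * e * (\<phi> q3 x - \<phi> q2 x) - 2 * e * x * (\<psi> q3 x - \<psi> q2 x)"
    using backlund_rel_derivative[OF B1 U nz1] unfolding t2_def t3_def l2_def l3_def e_def \<phi>_def \<psi>_def .
  have T01: "c2 x * t2 x - c1 x * t1 x = e * t2 x * t1 x * (l2 x + l1 x)"
    using toda_ratio_difference[OF \<epsilon> T0 T1 B0 U nz0]
    unfolding c1_def c2_def t1_def t2_def l1_def l2_def e_def by (simp add: mult.assoc)
  have T1x: "c2 x * t2 x = x + e * real (Suc j) - 2 * x * \<psi> q2 x - 2 * \<phi> q2 x"
    using toda_rel_at[OF T1] x unfolding c2_def t2_def e_def \<phi>_def \<psi>_def by blast
  have T2x: "c1 x * t3 x = x + e * real (Suc (Suc j)) - 2 * x * \<psi> q3 x - 2 * \<phi> q3 x"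
    using toda_rel_at[OF T2] x unfolding c1_def c_period t3_def e_def \<phi>_def \<psi>_def by blast
  have key: "t3 x * (2 * c1 x * t3 x - c2 x * t2 x - 2 * l3 x - 2 * x * dl3)
               = c2 x * (t2 x * t3 x + e * (backlund_const (j + 2) - backlund_const (Suc j))
                          - 2 * e * x * l3 x)"
  proof (rule propagation_algebra[OF _ _ _ _ parity])
    show "e = 1 \<or> e = -1" using \<epsilon> by (auto simp: e_def)
    show "t2 x \<noteq> 0" "t3 x \<noteq> 0" by (fact t_nz)+
    show "x \<noteq> 0" using x by simp
    show "l3 x = e * (c1 x / t2 x - c2 x / t3 x) - l2 x" by (fact l3_eq)
    show "dl3 = e * (poly (pderiv (toda_coeff j)) x / t2 x - c1 x * l2 x / t2 x
                    - poly (pderiv (toda_coeff (Suc j))) x / t3 x + c2 x * l3 x / t3 x) - dl2"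
      unfolding dl3_eq using t_nz by (simp add: field_simps)
    show "t2 x * t3 x - t2 x * t1 x = e * (backlund_const (Suc j) - backlund_const j) - 2 * e * x * l2 x"
      using B0x B1x unfolding l2_def toda_ratio_logderiv_def \<phi>_def by (simp add: algebra_simps)
    show "t2 x * t3 x * (l2 x + l3 x) - t2 x * t1 x * (l2 x + l1 x) = - 2 * e * (l2 x + x * dl2)"
      using dB0 dB1 unfolding l2_def dl2_def toda_ratio_logderiv_def \<phi>_def by (simp add: algebra_simps)
    show "c2 x * t2 x - c1 x * t1 x = e * t2 x * t1 x * (l2 x + l1 x)" by (rule T01)
  qed
  have K: "x + e * real (j + 3) - 2 * x * \<psi> q4 x - 2 * \<phi> q4 x
      = 2 * c1 x * t3 x - c2 x * t2 x - 2 * l3 x - 2 * x * dl3"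
    using T1x T2x unfolding l3_def dl3_def toda_ratio_logderiv_def \<phi>_def by (simp add: algebra_simps)
  have M: "x + e * backlund_const (j + 2) - 2 * e * x * (\<phi> q4 x - \<phi> q3 x)
      = t2 x * t3 x + e * (backlund_const (j + 2) - backlund_const (Suc j)) - 2 * e * x * l3 x"
    using B1x unfolding l3_def toda_ratio_logderiv_def \<phi>_def by (simp add: algebra_simps)
  have "(x + e * real (j + 3) - 2 * x * \<psi> q4 x - 2 * \<phi> q4 x) * t3 x
      = poly (toda_coeff (j + 3)) x * (x + e * backlund_const (j + 2) - 2 * e * x * (\<phi> q4 x - \<phi> q3 x))"
    unfolding K M c_period c2_def[symmetric] using key by (simp add: mult.commute)
  then show ?thesis
    unfolding e_def \<phi>_def \<psi>_def t3_def by (rule toda_backlund_of_ratio[OF x(5,6)])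
qed

lemma poly_eqI_infinite:
  fixes p q :: "'a::idom poly"
  assumes "infinite U" "\<And>y. y \<in> U \<Longrightarrow> poly p y = poly q y"
  shows "p = q"
proof (rule ccontr)
  assume "p \<noteq> q"
  then have "finite {x. poly (p - q) x = 0}" by (intro poly_roots_finite) simp
  moreover have "U \<subseteq> {x. poly (p - q) x = 0}" using assms(2) by auto
  ultimately show False using assms(1) finite_subset by blast
qed

lemma open_infinite_positive_nonroots:
  fixes P :: "real poly"
  assumes "P \<noteq> 0"
  shows "open {y. 0 < y \<and> poly P y \<noteq> 0}" "infinite {y. 0 < y \<and> poly P y \<noteq> 0}"
proof -
  have "open ({0<..} \<inter> {y. poly P y \<noteq> 0})"
    by (intro open_Int open_Collect_neq continuous_intros)
  then show "open {y. 0 < y \<and> poly P y \<noteq> 0}" by (simp add: Int_def)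
  have "{0<..} \<subseteq> {y. 0 < y \<and> poly P y \<noteq> 0} \<union> {y. poly P y = 0}" by auto
  then show "infinite {y. 0 < y \<and> poly P y \<noteq> 0}"
    using poly_roots_finite[OF assms] infinite_Ioi finite_subset by blast
qed

lemma toda_backlund_propagate:
  assumes \<epsilon>: "\<epsilon> = 1 \<or> \<epsilon> = -1"
    and nz: "q0 \<noteq> 0" "q1 \<noteq> 0" "q2 \<noteq> 0" "q3 \<noteq> 0" "q4 \<noteq> 0"
    and T0: "toda_rel \<epsilon> j q0 q1 q2" and T1: "toda_rel \<epsilon> (Suc j) q1 q2 q3"
    and T2: "toda_rel \<epsilon> (Suc (Suc j)) q2 q3 q4"
    and B0: "backlund_rel \<epsilon> j q0 q1 q2 q3" and B1: "backlund_rel \<epsilon> (Suc j) q1 q2 q3 q4"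
  shows "ohyama_lhs (\<epsilon> * int (j + 3)) q4 * q2 = toda_coeff (j + 3) * q3 * backlund_rhs \<epsilon> (j + 2) q3 q4"
proof -
  define P where "P = q0 * q1 * q2 * q3 * q4"
  have "P \<noteq> 0" using nz by (simp add: P_def)
  note U = open_infinite_positive_nonroots[OF this]
  show ?thesis
  proof (rule poly_eqI_infinite[OF U(2)])
    fix y assume y: "y \<in> {y. 0 < y \<and> poly P y \<noteq> 0}"
    show "poly (ohyama_lhs (\<epsilon> * int (j + 3)) q4 * q2) y
            = poly (toda_coeff (j + 3) * q3 * backlund_rhs \<epsilon> (j + 2) q3 q4) y"
      using toda_backlund_propagate_at[OF \<epsilon> U(1) y _ T0 T1 T2 B0 B1] by (simp add: P_def)
  qed
qed

section \<open>Consecutive Ohyama polynomials have no common root\<close>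

abbreviation cpoly :: "real poly \<Rightarrow> complex poly" where
  "cpoly \<equiv> map_poly complex_of_real"

lemma cpoly_simps [simp]:
  "cpoly (p + q) = cpoly p + cpoly q"
  "cpoly (p - q) = cpoly p - cpoly q"
  "cpoly (p * q) = cpoly p * cpoly q"
  "cpoly (smult a p) = smult (complex_of_real a) (cpoly p)"
  "cpoly (pCons a p) = pCons (complex_of_real a) (cpoly p)"
  "cpoly (pderiv p) = pderiv (cpoly p)"
  "cpoly 1 = 1"
  "cpoly p = 0 \<longleftrightarrow> p = 0"
  by (auto simp: poly_eq_iff coeff_map_poly coeff_mult coeff_pderiv coeff_pCons split: nat.split)

lemma cpoly_power [simp]: "cpoly (p ^ n) = cpoly p ^ n"
  by (induction n) simp_all

lemma poly_cpoly_of_real [simp]: "poly (cpoly p) (complex_of_real x) = complex_of_real (poly p x)"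
  by (induction p) simp_all

definition no_common_root :: "real poly \<Rightarrow> real poly \<Rightarrow> bool" where
  "no_common_root p q \<longleftrightarrow> (\<forall>z. poly (cpoly p) z = 0 \<longrightarrow> poly (cpoly q) z \<noteq> 0)"

lemma no_common_root_one: "no_common_root 1 q"
  by (simp add: no_common_root_def)

lemma dvd_if_no_common_root_complex:
  fixes A B p q :: "complex poly"
  assumes "A * p = B * q" "B \<noteq> 0" "\<And>z. poly B z = 0 \<Longrightarrow> poly A z \<noteq> 0"
  shows "B dvd p"
  using assms
proof (induction "degree B" arbitrary: B p q rule: less_induct)
  case less
  show ?case
  proof (cases "degree B = 0")
    case True
    then obtain b where b: "B = [:b:]" and "b \<noteq> 0" using less.prems(2) by (metis degree_eq_zeroE pCons_eq_0_iff)
    then have "p = B * smult (1 / b) p" by simp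
    then show ?thesis by (metis dvd_triv_left)
  next
    case False
    then obtain z where z: "poly B z = 0"
      using fundamental_theorem_of_algebra constant_degree by metis
    then obtain B1 where B1: "B = [:-z, 1:] * B1" by (metis dvdE poly_eq_0_iff_dvd)
    have "poly (A * p) z = 0" using less.prems(1) B1 by simp
    then have "poly p z = 0" using less.prems(3) z by simp
    then obtain p1 where p1: "p = [:-z, 1:] * p1" by (metis dvdE poly_eq_0_iff_dvd)
    have "[:-z, 1:] * (A * p1) = [:-z, 1:] * (B1 * q)"
      using less.prems(1) B1 p1 by (simp add: algebra_simps)
    then have eq: "A * p1 = B1 * q" using mult_left_cancel[of "[:-z, 1:]"] by simp
    have B10: "B1 \<noteq> 0" using less.prems(2) B1 by auto
    have "degree B = degree [:-z, 1:] + degree B1"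
      unfolding B1 by (rule degree_mult_eq) (use B10 in simp_all)
    then have "degree B1 < degree B" by simp
    then have "B1 dvd p1"
      using less.hyps eq B10 less.prems(3) unfolding B1 by auto
    then show ?thesis unfolding B1 p1 by (rule mult_dvd_mono[OF dvd_refl])
  qed
qed

lemma dvd_of_cpoly_dvd:
  fixes B p :: "real poly"
  assumes "cpoly B dvd cpoly p" "B \<noteq> 0"
  shows "B dvd p"
proof (rule ccontr)
  assume "\<not> B dvd p"
  then have m0: "p mod B \<noteq> 0" by (simp add: dvd_eq_mod_eq_0)
  have "cpoly (p mod B) = cpoly p - cpoly B * cpoly (p div B)"
    by (metis add_diff_cancel_left' cpoly_simps(1,3) div_mult_mod_eq mult.commute)
  then have "cpoly B dvd cpoly (p mod B)" using assms(1) by simp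
  then have "degree B \<le> degree (p mod B)"
    using m0 dvd_imp_degree_le by (fastforce simp: degree_map_poly)
  with degree_mod_less'[OF assms(2) m0] show False by simp
qed

lemma dvd_if_no_common_root:
  fixes x y L R :: "real poly"
  assumes "x * L = y * R" "y \<noteq> 0" "no_common_root y x"
  shows "y dvd L"
proof (rule dvd_of_cpoly_dvd[OF dvd_if_no_common_root_complex])
  show "cpoly x * cpoly L = cpoly y * cpoly R" using arg_cong[OF assms(1), of cpoly] by simp
qed (use assms in \<open>auto simp: no_common_root_def\<close>)

lemma no_common_root_toda_coeff:
  assumes "no_common_root x y" "poly x 0 \<noteq> 0"
  shows "no_common_root (toda_coeff i * y) x"
  using assms unfolding no_common_root_def toda_coeff_def
  by (auto simp: poly_cpoly_of_real[of x 0, simplified])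

definition toda_lhs :: "'a::idom \<Rightarrow> 'a poly \<Rightarrow> 'a poly" where
  "toda_lhs c Y = [:c, 1:] * Y^2 - smult 2 ([:0, 1:] * Y * pderiv (pderiv Y))
     + smult 2 ([:0, 1:] * (pderiv Y)^2) - smult 2 (Y * pderiv Y)"

lemma cpoly_ohyama_lhs: "cpoly (ohyama_lhs n p) = toda_lhs (of_int n) (cpoly p)"
  by (simp add: ohyama_lhs_def toda_lhs_def)

lemma mult_pderiv_power:
  fixes \<pi> :: "'a::{idom, semiring_char_0} poly"
  assumes "pderiv \<pi> = 1"
  shows "\<pi> * pderiv (\<pi> ^ j) = smult (of_nat j) (\<pi> ^ j)"
proof (cases j)
  case (Suc n)
  then show ?thesis by (simp only: pderiv_power_Suc assms) (simp add: algebra_simps)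
qed simp

lemma pderiv_power_Suc_mult:
  fixes \<pi> G :: "'a::{idom, semiring_char_0} poly"
  assumes "pderiv \<pi> = 1"
  shows "pderiv (\<pi> ^ Suc j * G) = \<pi> ^ j * (smult (of_nat (Suc j)) G + \<pi> * pderiv G)"
proof -
  have "pderiv (\<pi> ^ Suc j) = smult (of_nat (Suc j)) (\<pi> ^ j)"
    by (simp only: pderiv_power_Suc assms mult_1_right)
  then show ?thesis by (simp add: pderiv_mult algebra_simps)
qed

lemma toda_lhs_at_multiple_root:
  fixes \<pi> G :: "'a::{idom, semiring_char_0} poly"
  assumes \<pi>: "pderiv \<pi> = 1" "poly \<pi> r = 0"
  obtains W where "toda_lhs c (\<pi> ^ Suc j * G) = \<pi> ^ j * \<pi> ^ j * W"
    and "poly W r = 2 * r * of_nat (Suc j) * (poly G r)^2"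
proof -
  define V where "V = smult (of_nat (Suc j)) G + \<pi> * pderiv G"
  have dY: "pderiv (\<pi> ^ Suc j * G) = \<pi> ^ j * V"
    unfolding V_def by (rule pderiv_power_Suc_mult[OF \<pi>(1)])
  have "\<pi> ^ Suc j * G * pderiv (pderiv (\<pi> ^ Suc j * G))
      = \<pi> ^ j * G * V * (\<pi> * pderiv (\<pi> ^ j)) + \<pi> ^ j * \<pi> ^ j * (G * (\<pi> * pderiv V))"
    unfolding dY by (simp add: pderiv_mult algebra_simps)
  then have YddY: "\<pi> ^ Suc j * G * pderiv (pderiv (\<pi> ^ Suc j * G))
      = \<pi> ^ j * \<pi> ^ j * (G * (smult (of_nat j) V + \<pi> * pderiv V))"
    unfolding mult_pderiv_power[OF \<pi>(1)] by (simp add: algebra_simps)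
  define W where "W = [:c, 1:] * \<pi>^2 * G^2 - smult 2 ([:0, 1:] * (G * (smult (of_nat j) V + \<pi> * pderiv V)))
     + smult 2 ([:0, 1:] * V^2) - smult 2 (\<pi> * G * V)"
  show ?thesis
  proof
    show "toda_lhs c (\<pi> ^ Suc j * G) = \<pi> ^ j * \<pi> ^ j * W"
      using YddY unfolding toda_lhs_def dY W_def
      by (simp add: algebra_simps power2_eq_square)
    show "poly W r = 2 * r * of_nat (Suc j) * (poly G r)^2"
      unfolding W_def V_def by (simp add: \<pi>(2) algebra_simps power2_eq_square)
  qed
qed

lemma backlund_expr_at_multiple_root:
  fixes \<pi> G X :: "'a::{idom, semiring_char_0} poly"
  assumes \<pi>: "pderiv \<pi> = 1" "poly \<pi> r = 0"
  obtains U where "[:g, 1:] * (\<pi> ^ Suc j * G) * X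
        - smult (2 * e) ([:0, 1:] * (pderiv (\<pi> ^ Suc j * G) * X - \<pi> ^ Suc j * G * pderiv X))
      = \<pi> ^ j * U"
    and "poly U r = - 2 * e * r * of_nat (Suc j) * poly G r * poly X r"
proof
  define V where "V = smult (of_nat (Suc j)) G + \<pi> * pderiv G"
  show "[:g, 1:] * (\<pi> ^ Suc j * G) * X
        - smult (2 * e) ([:0, 1:] * (pderiv (\<pi> ^ Suc j * G) * X - \<pi> ^ Suc j * G * pderiv X))
      = \<pi> ^ j * ([:g, 1:] * \<pi> * G * X - smult (2 * e) ([:0, 1:] * (V * X - \<pi> * G * pderiv X)))"
    unfolding pderiv_power_Suc_mult[OF \<pi>(1)] V_def[symmetric] by (simp add: algebra_simps)
  show "poly ([:g, 1:] * \<pi> * G * X - smult (2 * e) ([:0, 1:] * (V * X - \<pi> * G * pderiv X))) r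
      = - 2 * e * r * of_nat (Suc j) * poly G r * poly X r"
    unfolding V_def by (simp add: \<pi>(2) algebra_simps)
qed

lemma toda_backlund_no_common_root:
  fixes X Y W U C :: "'a::{idom, semiring_char_0} poly"
  assumes Y0: "poly Y 0 \<noteq> 0" and e: "e \<noteq> 0"
    and Xr: "poly X r \<noteq> 0" and Yr: "poly Y r = 0" and Cr: "poly C r \<noteq> 0"
    and T: "toda_lhs c Y = C * W * X"
    and B: "W * U = [:g, 1:] * Y * X - smult (2 * e) ([:0, 1:] * (pderiv Y * X - Y * pderiv X))"
  shows "poly W r \<noteq> 0"
proof -
  define \<pi> where "\<pi> = [:-r, 1:]"
  have \<pi>: "pderiv \<pi> = 1" "poly \<pi> r = 0" by (simp_all add: \<pi>_def pderiv_pCons)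
  have ord\<pi>: "order r (\<pi> ^ n) = n" for n unfolding \<pi>_def by (rule order_power_n_n)
  have r0: "r \<noteq> 0" using Y0 Yr by auto
  have "Y \<noteq> 0" using Y0 by auto
  then obtain G where YG: "Y = \<pi> ^ order r Y * G" and "\<not> \<pi> dvd G"
    using order_decomp unfolding \<pi>_def by blast
  then have Gr: "poly G r \<noteq> 0" by (simp add: \<pi>_def poly_eq_0_iff_dvd)
  have "order r Y \<noteq> 0" using Yr \<open>Y \<noteq> 0\<close> order_root by blast
  then obtain j where Y: "Y = \<pi> ^ Suc j * G" using YG by (cases "order r Y") auto
  from toda_lhs_at_multiple_root[OF \<pi>, of c j G] obtain W0
    where LW: "toda_lhs c Y = \<pi> ^ j * \<pi> ^ j * W0" and W0r: "poly W0 r = 2 * r * of_nat (Suc j) * (poly G r)^2"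
    unfolding Y by blast
  from backlund_expr_at_multiple_root[OF \<pi>, of g j G X e] obtain U0
    where BU: "W * U = \<pi> ^ j * U0" and U0r: "poly U0 r = - 2 * e * r * of_nat (Suc j) * poly G r * poly X r"
    unfolding B Y by blast
  have "(of_nat (Suc j) :: 'a) \<noteq> 0" by (rule of_nat_neq_0)
  then have "poly W0 r \<noteq> 0" "poly U0 r \<noteq> 0" using W0r U0r r0 Gr e Xr by simp_all
  then have W0: "W0 \<noteq> 0" "order r W0 = 0" and U0: "U0 \<noteq> 0" "order r U0 = 0"
    by (auto simp: order_0I)
  have "\<pi> \<noteq> 0" by (simp add: \<pi>_def)
  have CWX: "C * W * X \<noteq> 0" using T LW W0 \<open>\<pi> \<noteq> 0\<close> by auto
  then have "order r (C * W * X) = order r W"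
    using Cr Xr by (simp add: order_mult order_0I)
  moreover have "order r (\<pi> ^ j * \<pi> ^ j * W0) = 2 * j"
    using W0 \<open>\<pi> \<noteq> 0\<close> by (simp add: order_mult ord\<pi>)
  ultimately have ordW: "order r W = 2 * j" using T LW by simp
  have "order r W + order r U = j"
    using BU U0 \<open>\<pi> \<noteq> 0\<close> by (metis mult_eq_0_iff order_mult ord\<pi> add_0_right power_not_zero)
  then have "order r W = 0" using ordW by simp
  moreover have "W \<noteq> 0" using CWX by auto
  ultimately show ?thesis using order_root by blast
qed

lemma no_common_root_propagate:
  assumes \<epsilon>: "\<epsilon> = 1 \<or> \<epsilon> = -1" and y0: "poly y 0 \<noteq> 0" and nc: "no_common_root x y"
    and T: "toda_rel \<epsilon> i x y w" and B: "backlund_rel \<epsilon> j u x y w"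
  shows "no_common_root y w"
  unfolding no_common_root_def
proof (intro allI impI)
  fix r assume yr: "poly (cpoly y) r = 0"
  have y0': "poly (cpoly y) 0 \<noteq> 0" using y0 poly_cpoly_of_real[of y 0] by simp
  show "poly (cpoly w) r \<noteq> 0"
  proof (rule toda_backlund_no_common_root[OF y0' _ _ yr])
    show "(of_int \<epsilon> :: complex) \<noteq> 0" using \<epsilon> by auto
    show "poly (cpoly x) r \<noteq> 0" using nc yr unfolding no_common_root_def by blast
    have "r \<noteq> 0" using yr y0' by auto
    then show "poly (cpoly (toda_coeff i)) r \<noteq> 0" by (simp add: toda_coeff_def)
    show "toda_lhs (of_int (\<epsilon> * int i)) (cpoly y) = cpoly (toda_coeff i) * cpoly w * cpoly x"
      using T unfolding toda_rel_def by (metis cpoly_ohyama_lhs cpoly_simps(3))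
    show "cpoly w * cpoly u = [:complex_of_real (of_int \<epsilon> * backlund_const j), 1:] * cpoly y * cpoly x
        - smult (2 * of_int \<epsilon>) ([:0, 1:] * (pderiv (cpoly y) * cpoly x - cpoly y * pderiv (cpoly x)))"
      using arg_cong[OF B[unfolded backlund_rel_def], of cpoly] by (simp add: backlund_rhs_def)
  qed
qed

section \<open>Exactness of the Ohyama recurrence\<close>

lemma toda_backlund_next:
  assumes \<epsilon>: "\<epsilon> = 1 \<or> \<epsilon> = -1"
    and nz: "q0 \<noteq> 0" "q1 \<noteq> 0" "q2 \<noteq> 0" "q3 \<noteq> 0" "q4 \<noteq> 0" and q2_0: "poly q2 0 \<noteq> 0"
    and T0: "toda_rel \<epsilon> j q0 q1 q2" and T1: "toda_rel \<epsilon> (Suc j) q1 q2 q3"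
    and T2: "toda_rel \<epsilon> (Suc (Suc j)) q2 q3 q4"
    and B0: "backlund_rel \<epsilon> j q0 q1 q2 q3" and B1: "backlund_rel \<epsilon> (Suc j) q1 q2 q3 q4"
    and nc: "no_common_root q2 q3"
    and q5: "q5 = ohyama_lhs (\<epsilon> * int (j + 3)) q4 div (toda_coeff (j + 3) * q3)"
  shows "toda_rel \<epsilon> (j + 3) q3 q4 q5" "backlund_rel \<epsilon> (j + 2) q2 q3 q4 q5"
proof -
  define L where "L = ohyama_lhs (\<epsilon> * int (j + 3)) q4"
  define y where "y = toda_coeff (j + 3) * q3"
  have y0: "y \<noteq> 0" using nz by (simp add: y_def toda_coeff_def)
  have LR: "L * q2 = y * backlund_rhs \<epsilon> (j + 2) q3 q4"
    using toda_backlund_propagate[OF \<epsilon> nz T0 T1 T2 B0 B1] by (simp add: L_def y_def mult.assoc)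
  have "y dvd L"
    using dvd_if_no_common_root[OF LR[unfolded mult.commute[of L]] y0]
      no_common_root_toda_coeff[OF nc q2_0] unfolding y_def by blast
  then have L: "L = y * q5" unfolding q5 L_def[symmetric] y_def[symmetric] by simp
  then show "toda_rel \<epsilon> (j + 3) q3 q4 q5"
    unfolding toda_rel_def L_def[symmetric] y_def by (simp add: algebra_simps)
  have "y * (q5 * q2) = y * backlund_rhs \<epsilon> (j + 2) q3 q4" using LR L by (simp add: algebra_simps)
  with y0 show "backlund_rel \<epsilon> (j + 2) q2 q3 q4 q5"
    unfolding backlund_rel_def by simp
qed

lemma backlund_rel_poly_0:
  assumes "backlund_rel \<epsilon> j qm q0 q1 q2" "\<epsilon> \<noteq> 0" "poly q0 0 \<noteq> 0" "poly q1 0 \<noteq> 0"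
  shows "poly q2 0 \<noteq> 0"
proof -
  have "poly q2 0 * poly qm 0 = of_int \<epsilon> * backlund_const j * poly q1 0 * poly q0 0"
    using arg_cong[OF assms(1)[unfolded backlund_rel_def], of "\<lambda>p. poly p 0"]
    by (simp add: poly_backlund_rhs)
  moreover have "backlund_const j > 0" by (simp add: backlund_const_def)
  ultimately show ?thesis using assms(2-4) by auto
qed

lemma ohyama_seq_small:
  assumes "\<epsilon> = 1 \<or> \<epsilon> = -1"
  shows "ohyama_seq \<epsilon> 2 = [:of_int \<epsilon>, 1:]"
    and "ohyama_seq \<epsilon> 3 = [:5, 4 * of_int \<epsilon>, 1:]"
    and "ohyama_seq \<epsilon> 4 = [:35, 70 * of_int \<epsilon>, 40, 10 * of_int \<epsilon>, 1:]"
proof -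
  show s2: "ohyama_seq \<epsilon> 2 = [:of_int \<epsilon>, 1:]"
    by (simp add: numeral_2_eq_2 ohyama_lhs_def toda_coeff_def)
  have "ohyama_seq \<epsilon> 3 = ohyama_lhs (\<epsilon> * 2) (ohyama_seq \<epsilon> 2) div (toda_coeff 2 * ohyama_seq \<epsilon> 1)"
    by (simp add: numeral_3_eq_3 numeral_2_eq_2)
  also have "\<dots> = ([:0, 1:] * [:5, 4 * of_int \<epsilon>, 1:]) div [:0, 1:]"
    unfolding s2 using assms
    by (elim disjE) (simp_all add: toda_coeff_def ohyama_lhs_def pderiv_pCons power2_eq_square)
  finally show s3: "ohyama_seq \<epsilon> 3 = [:5, 4 * of_int \<epsilon>, 1:]"
    by (metis nonzero_mult_div_cancel_left pCons_eq_0_iff zero_neq_one)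
  have "ohyama_seq \<epsilon> 4 = ohyama_lhs (\<epsilon> * 3) (ohyama_seq \<epsilon> 3) div (toda_coeff 3 * ohyama_seq \<epsilon> 2)"
    by (simp add: numeral_3_eq_3 numeral_2_eq_2 eval_nat_numeral)
  also have "\<dots> = ([:of_int \<epsilon>, 1:] * [:35, 70 * of_int \<epsilon>, 40, 10 * of_int \<epsilon>, 1:]) div [:of_int \<epsilon>, 1:]"
    unfolding s2 s3 using assms
    by (elim disjE) (simp_all add: toda_coeff_def ohyama_lhs_def pderiv_pCons power2_eq_square)
  finally show "ohyama_seq \<epsilon> 4 = [:35, 70 * of_int \<epsilon>, 40, 10 * of_int \<epsilon>, 1:]"
    by (metis nonzero_mult_div_cancel_left pCons_eq_0_iff zero_neq_one)
qed

definition ohyama_seq_inv :: "int \<Rightarrow> nat \<Rightarrow> bool" where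
  "ohyama_seq_inv \<epsilon> k \<longleftrightarrow>
     (\<forall>i \<le> k + 1. poly (ohyama_seq \<epsilon> i) 0 \<noteq> 0)
   \<and> (\<forall>i \<in> {1..k}. toda_rel \<epsilon> i (ohyama_seq \<epsilon> (i - 1)) (ohyama_seq \<epsilon> i) (ohyama_seq \<epsilon> (i + 1)))
   \<and> (\<forall>i \<in> {1..<k}. backlund_rel \<epsilon> i (ohyama_seq \<epsilon> (i - 1)) (ohyama_seq \<epsilon> i)
                                       (ohyama_seq \<epsilon> (i + 1)) (ohyama_seq \<epsilon> (i + 2)))
   \<and> (\<forall>i \<le> k. no_common_root (ohyama_seq \<epsilon> i) (ohyama_seq \<epsilon> (i + 1)))"

lemma ohyama_seq_inv_3:
  assumes \<epsilon>: "\<epsilon> = 1 \<or> \<epsilon> = -1"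
  shows "ohyama_seq_inv \<epsilon> 3"
proof -
  define a where "a = ohyama_seq \<epsilon>"
  have a: "a 0 = 1" "a 1 = 1" "a (Suc 0) = 1" "a 2 = [:of_int \<epsilon>, 1:]" "a 3 = [:5, 4 * of_int \<epsilon>, 1:]"
    "a 4 = [:35, 70 * of_int \<epsilon>, 40, 10 * of_int \<epsilon>, 1:]"
    using ohyama_seq_small[OF \<epsilon>] by (simp_all add: a_def)
  have T: "toda_rel \<epsilon> 1 (a 0) (a 1) (a 2)" "toda_rel \<epsilon> 2 (a 1) (a 2) (a 3)" "toda_rel \<epsilon> 3 (a 2) (a 3) (a 4)"
    and B: "backlund_rel \<epsilon> 1 (a 0) (a 1) (a 2) (a 3)" "backlund_rel \<epsilon> 2 (a 1) (a 2) (a 3) (a 4)"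
    using \<epsilon> unfolding toda_rel_def backlund_rel_def a
    by (auto simp: ohyama_lhs_def backlund_rhs_def pderiv_pCons power2_eq_square
                   toda_coeff_def backlund_const_def)
  have p0: "poly (a i) 0 \<noteq> 0" if "i \<le> 4" for i
  proof -
    have "i = 0 \<or> i = 1 \<or> i = 2 \<or> i = 3 \<or> i = 4" using that by auto
    then show ?thesis using \<epsilon> by (elim disjE) (auto simp: a)
  qed
  have nc12: "no_common_root (a 1) (a 2)" unfolding a(2) by (rule no_common_root_one)
  have nc23: "no_common_root (a 2) (a 3)" by (rule no_common_root_propagate[OF \<epsilon> p0 nc12 T(2) B(1)]) simp
  have nc34: "no_common_root (a 3) (a 4)" by (rule no_common_root_propagate[OF \<epsilon> p0 nc23 T(3) B(2)]) simp
  have nc01: "no_common_root (a 0) (a 1)" unfolding a(1) by (rule no_common_root_one)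
  show ?thesis
    unfolding ohyama_seq_inv_def a_def[symmetric]
    using p0 T B nc01 nc12 nc23 nc34 by (auto simp: le_Suc_eq less_Suc_eq numeral_eq_Suc)
qed

lemma ohyama_seq_inv_Suc:
  assumes \<epsilon>: "\<epsilon> = 1 \<or> \<epsilon> = -1" and "ohyama_seq_inv \<epsilon> (m + 3)"
  shows "ohyama_seq_inv \<epsilon> (m + 4)"
proof -
  define a where "a = ohyama_seq \<epsilon>"
  from assms(2) have p0: "\<And>i. i \<le> m + 4 \<Longrightarrow> poly (a i) 0 \<noteq> 0"
    and T: "\<And>i. i \<in> {1..m + 3} \<Longrightarrow> toda_rel \<epsilon> i (a (i - 1)) (a i) (a (i + 1))"
    and B: "\<And>i. i \<in> {1..<m + 3} \<Longrightarrow> backlund_rel \<epsilon> i (a (i - 1)) (a i) (a (i + 1)) (a (i + 2))"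
    and N: "\<And>i. i \<le> m + 3 \<Longrightarrow> no_common_root (a i) (a (i + 1))"
    unfolding ohyama_seq_inv_def a_def by auto
  have nz: "a (m + i) \<noteq> 0" if "i \<le> 4" for i using p0[of "m + i"] that by auto
  have nzs: "a m \<noteq> 0" "a (m + 1) \<noteq> 0" "a (m + 2) \<noteq> 0" "a (m + 3) \<noteq> 0" "a (m + 4) \<noteq> 0"
    using nz[of 0] nz[of 1] nz[of 2] nz[of 3] nz[of 4] by (simp_all add: numeral_eq_Suc)
  have "poly (a (m + 2)) 0 \<noteq> 0" by (rule p0) simp
  moreover have "toda_rel \<epsilon> (m + 1) (a m) (a (m + 1)) (a (m + 2))"
    using T[of "m + 1"] by (simp add: numeral_eq_Suc)
  moreover have "toda_rel \<epsilon> (Suc (m + 1)) (a (m + 1)) (a (m + 2)) (a (m + 3))"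
    using T[of "m + 2"] by (simp add: numeral_eq_Suc)
  moreover have "toda_rel \<epsilon> (Suc (Suc (m + 1))) (a (m + 2)) (a (m + 3)) (a (m + 4))"
    using T[of "m + 3"] by (simp add: numeral_eq_Suc)
  moreover have "backlund_rel \<epsilon> (m + 1) (a m) (a (m + 1)) (a (m + 2)) (a (m + 3))"
    using B[of "m + 1"] by (simp add: numeral_eq_Suc)
  moreover have "backlund_rel \<epsilon> (Suc (m + 1)) (a (m + 1)) (a (m + 2)) (a (m + 3)) (a (m + 4))"
    using B[of "m + 2"] by (simp add: numeral_eq_Suc)
  moreover have "no_common_root (a (m + 2)) (a (m + 3))" using N[of "m + 2"] by (simp add: numeral_eq_Suc)
  moreover have "a (m + 5) = ohyama_lhs (\<epsilon> * int (m + 1 + 3)) (a (m + 4)) div (toda_coeff (m + 1 + 3) * a (m + 3))"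
    by (simp add: a_def numeral_eq_Suc)
  ultimately have "toda_rel \<epsilon> (m + 1 + 3) (a (m + 3)) (a (m + 4)) (a (m + 5))"
      "backlund_rel \<epsilon> (m + 1 + 2) (a (m + 2)) (a (m + 3)) (a (m + 4)) (a (m + 5))"
    using toda_backlund_next[OF \<epsilon> nzs] by blast+
  then have T': "toda_rel \<epsilon> (m + 4) (a (m + 3)) (a (m + 4)) (a (m + 5))"
    and B': "backlund_rel \<epsilon> (m + 3) (a (m + 2)) (a (m + 3)) (a (m + 4)) (a (m + 5))"
    by (simp_all add: numeral_eq_Suc)
  have p0': "poly (a (m + 5)) 0 \<noteq> 0"
    by (rule backlund_rel_poly_0[OF B']) (use \<epsilon> p0 in auto)
  have "no_common_root (a (m + 3)) (a (m + 4))" using N[of "m + 3"] by (simp add: numeral_eq_Suc)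
  moreover have "poly (a (m + 4)) 0 \<noteq> 0" by (rule p0) simp
  ultimately have N': "no_common_root (a (m + 4)) (a (m + 5))"
    using no_common_root_propagate[OF \<epsilon> _ _ T' B'] by blast
  show ?thesis
    unfolding ohyama_seq_inv_def a_def[symmetric]
  proof (intro conjI ballI allI impI)
    fix i assume "i \<le> m + 4 + 1"
    then consider "i \<le> m + 4" | "i = m + 5" by linarith
    then show "poly (a i) 0 \<noteq> 0" using p0 p0' by cases auto
  next
    fix i assume "i \<in> {1..m + 4}"
    then consider "i \<in> {1..m + 3}" | "i = m + 4" by fastforce
    then show "toda_rel \<epsilon> i (a (i - 1)) (a i) (a (i + 1))"
      using T T' by cases (auto simp: numeral_eq_Suc)
  next
    fix i assume "i \<in> {1..<m + 4}"
    then consider "i \<in> {1..<m + 3}" | "i = m + 3" by fastforce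
    then show "backlund_rel \<epsilon> i (a (i - 1)) (a i) (a (i + 1)) (a (i + 2))"
      using B B' by cases (auto simp: numeral_eq_Suc)
  next
    fix i assume "i \<le> m + 4"
    then consider "i \<le> m + 3" | "i = m + 4" by linarith
    then show "no_common_root (a i) (a (i + 1))" using N N' by cases (auto simp: numeral_eq_Suc)
  qed
qed

lemma ohyama_seq_inv_all:
  assumes \<epsilon>: "\<epsilon> = 1 \<or> \<epsilon> = -1"
  shows "ohyama_seq_inv \<epsilon> (m + 3)"
proof (induction m)
  case (Suc m)
  have "Suc m + 3 = m + 4" by simp
  then show ?case using ohyama_seq_inv_Suc[OF \<epsilon> Suc] by (simp only:)
qed (use ohyama_seq_inv_3[OF \<epsilon>] in simp)

lemma ohyama_seq_poly_0:
  assumes "\<epsilon> = 1 \<or> \<epsilon> = -1"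
  shows "poly (ohyama_seq \<epsilon> i) 0 \<noteq> 0"
  using ohyama_seq_inv_all[OF assms, of i] unfolding ohyama_seq_inv_def by auto

lemma ohyama_seq_toda:
  assumes "\<epsilon> = 1 \<or> \<epsilon> = -1" "1 \<le> i"
  shows "ohyama_lhs (\<epsilon> * int i) (ohyama_seq \<epsilon> i)
           = toda_coeff i * ohyama_seq \<epsilon> (i + 1) * ohyama_seq \<epsilon> (i - 1)"
  using ohyama_seq_inv_all[OF assms(1), of i] assms(2) unfolding ohyama_seq_inv_def toda_rel_def by auto

lemma ohyama_of_nat: "ohyama (int m) = ohyama_seq 1 m"
  by (simp add: ohyama_eq_seq)

lemma ohyama_uminus_of_nat: "ohyama (- int m) = ohyama_seq (-1) m"
  by (cases "m = 0") (simp_all add: ohyama_eq_seq)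

lemma ohyama_poly_0: "poly (ohyama n) 0 \<noteq> 0"
  unfolding ohyama_eq_seq by (simp add: ohyama_seq_poly_0)

lemma ohyama_toda:
  "ohyama_lhs n (ohyama n) = (if odd n then 1 else [:0, 1:]) * ohyama (n + 1) * ohyama (n - 1)"
proof (cases n rule: int_cases3)
  case zero
  then show ?thesis by (simp add: ohyama_eq_seq ohyama_lhs_def)
next
  case (pos m)
  have "n + 1 = int (m + 1)" "n - 1 = int (m - 1)" using pos by simp_all
  then have "ohyama (n + 1) = ohyama_seq 1 (m + 1)" "ohyama (n - 1) = ohyama_seq 1 (m - 1)"
    by (simp_all only: ohyama_of_nat)
  then show ?thesis
    using ohyama_seq_toda[of 1 m] pos by (simp add: ohyama_of_nat toda_coeff_def)
next
  case (neg m)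
  have "n + 1 = - int (m - 1)" "n - 1 = - int (m + 1)" using neg by simp_all
  then have "ohyama (n + 1) = ohyama_seq (-1) (m - 1)" "ohyama (n - 1) = ohyama_seq (-1) (m + 1)"
    by (simp_all only: ohyama_uminus_of_nat)
  then show ?thesis
    using ohyama_seq_toda[of "-1" m] neg by (simp add: ohyama_uminus_of_nat toda_coeff_def mult_ac)
qed

section \<open>The \<sigma>-functions\<close>

definition toda_bracket :: "(real \<Rightarrow> real) \<Rightarrow> real \<Rightarrow> real" where
  "toda_bracket f z = z * ((deriv f z)^2 - f z * deriv (deriv f) z) - f z * deriv f z"

definition cbrt_half :: "real \<Rightarrow> real" where
  "cbrt_half z = (z / 2) powr (1/3)"

lemma cbrt_half_pos: "z > 0 \<Longrightarrow> cbrt_half z > 0"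
  by (simp add: cbrt_half_def)

lemma cbrt_half_cube: "z > 0 \<Longrightarrow> (cbrt_half z)^3 = z / 2"
  by (simp add: cbrt_half_def powr_realpow[symmetric] powr_powr)

lemma has_real_derivative_cbrt_half:
  assumes "z > 0"
  shows "(cbrt_half has_real_derivative 1 / (6 * (cbrt_half z)^2)) (at z)"
proof -
  have d: "(cbrt_half has_real_derivative 1/3 * (z/2) powr (1/3 - 1) * (1/2)) (at z)"
    unfolding cbrt_half_def[abs_def] using assms
    by (intro DERIV_chain2[OF has_real_derivative_powr] derivative_eq_intros) auto
  have "(z/2) powr (1/3 - 1) * (cbrt_half z)^2 = (z/2) powr ((1/3 - 1) + 1/3 + 1/3)"
    unfolding cbrt_half_def power2_eq_square powr_add by (simp add: mult.assoc)
  then have "(z/2) powr (1/3 - 1) * (cbrt_half z)^2 = 1" using assms by simp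
  then have "1/3 * (z/2) powr (1/3 - 1) * (1/2) = 1 / (6 * (cbrt_half z)^2)"
    using cbrt_half_pos[OF assms] by (simp add: field_simps)
  with d show ?thesis by (simp add: mult.commute)
qed

lemma toda_bracket_cbrt_half:
  assumes g: "\<And>x. x > 0 \<Longrightarrow> (g has_real_derivative g1 x) (at x)"
    and g1: "\<And>x. x > 0 \<Longrightarrow> (g1 has_real_derivative g2 x) (at x)"
    and z: "z > 0"
  shows "toda_bracket (\<lambda>y. g (cbrt_half y)) z
    = (cbrt_half z * ((g1 (cbrt_half z))^2 - g (cbrt_half z) * g2 (cbrt_half z))
        - g (cbrt_half z) * g1 (cbrt_half z)) / (18 * (cbrt_half z)^2)"
proof -
  define \<zeta> where "\<zeta> = cbrt_half z"
  have \<zeta>: "\<zeta> > 0" "z = 2 * \<zeta>^3" using cbrt_half_pos[OF z] cbrt_half_cube[OF z] by (simp_all add: \<zeta>_def)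
  have d1: "((\<lambda>y. g (cbrt_half y)) has_real_derivative g1 (cbrt_half y) / (6 * (cbrt_half y)^2)) (at y)"
    if "y > 0" for y
    using DERIV_chain2[OF g[OF cbrt_half_pos[OF that]] has_real_derivative_cbrt_half[OF that]] by simp
  have "((\<lambda>y. g1 (cbrt_half y) / (6 * (cbrt_half y)^2)) has_real_derivative
          g2 \<zeta> / (36 * \<zeta>^4) - g1 \<zeta> / (18 * \<zeta>^5)) (at z)"
  proof -
    have dg1: "((\<lambda>y. g1 (cbrt_half y)) has_real_derivative g2 \<zeta> * (1 / (6 * \<zeta>^2))) (at z)"
      unfolding \<zeta>_def by (rule DERIV_chain2[OF g1[OF cbrt_half_pos[OF z]] has_real_derivative_cbrt_half[OF z]])
    have dsq: "((\<lambda>y. 6 * (cbrt_half y)^2) has_real_derivative 2 / \<zeta>) (at z)"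
      by (rule DERIV_cong, (rule derivative_intros has_real_derivative_cbrt_half[OF z])+)
         (use \<zeta>(1) in \<open>simp add: \<zeta>_def field_simps power2_eq_square\<close>)
    show ?thesis
      by (rule DERIV_cong[OF DERIV_divide[OF dg1 dsq]]) (use \<zeta>(1) in \<open>simp_all add: \<zeta>_def[symmetric] field_simps eval_nat_numeral\<close>)
  qed
  then have "(deriv (\<lambda>y. g (cbrt_half y)) has_real_derivative
          g2 \<zeta> / (36 * \<zeta>^4) - g1 \<zeta> / (18 * \<zeta>^5)) (at z)"
    by (rule has_field_derivative_transform_within_open[of _ _ _ "{0<..}"])
       (use z DERIV_imp_deriv[OF d1] in auto)
  then have D2: "deriv (deriv (\<lambda>y. g (cbrt_half y))) z = g2 \<zeta> / (36 * \<zeta>^4) - g1 \<zeta> / (18 * \<zeta>^5)"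
    by (rule DERIV_imp_deriv)
  have D1: "deriv (\<lambda>y. g (cbrt_half y)) z = g1 \<zeta> / (6 * \<zeta>^2)"
    unfolding \<zeta>_def by (rule DERIV_imp_deriv[OF d1[OF z]])
  show ?thesis
    unfolding toda_bracket_def \<zeta>_def[symmetric] D1 D2
    using \<zeta>(1) by (simp add: \<zeta>(2) field_simps eval_nat_numeral)
qed

definition ohyama_gauge :: "real \<Rightarrow> real \<Rightarrow> int \<Rightarrow> real \<Rightarrow> real" where
  "ohyama_gauge K a n x = K * x powr a * exp (- 9/8 * x^4 - 3/2 * of_int n * x^2)"

definition gauge_rate :: "real \<Rightarrow> int \<Rightarrow> real \<Rightarrow> real" where
  "gauge_rate a n x = a / x - 9/2 * x^3 - 3 * of_int n * x"

lemma has_real_derivative_ohyama_gauge: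
  assumes "x > 0"
  shows "(ohyama_gauge K a n has_real_derivative ohyama_gauge K a n x * gauge_rate a n x) (at x)"
  unfolding ohyama_gauge_def[abs_def]
  by (rule DERIV_cong, (rule derivative_intros assms | simp only: mult.assoc)+)
     (use assms in \<open>simp add: gauge_rate_def powr_diff field_simps\<close>)

lemma has_real_derivative_gauge_rate:
  assumes "x > 0"
  shows "(gauge_rate a n has_real_derivative - a / x^2 - 27/2 * x^2 - 3 * of_int n) (at x)"
  unfolding gauge_rate_def[abs_def] using assms
  by (auto intro!: derivative_eq_intros simp: field_simps power2_eq_square)

definition ohyama_profile :: "real \<Rightarrow> real \<Rightarrow> int \<Rightarrow> real poly \<Rightarrow> real \<Rightarrow> real" where
  "ohyama_profile K a n p x = ohyama_gauge K a n x * poly p (3 * x^2)"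

definition ohyama_profile_d1 :: "real \<Rightarrow> real \<Rightarrow> int \<Rightarrow> real poly \<Rightarrow> real \<Rightarrow> real" where
  "ohyama_profile_d1 K a n p x = ohyama_gauge K a n x
     * (gauge_rate a n x * poly p (3 * x^2) + 6 * x * poly (pderiv p) (3 * x^2))"

definition ohyama_profile_d2 :: "real \<Rightarrow> real \<Rightarrow> int \<Rightarrow> real poly \<Rightarrow> real \<Rightarrow> real" where
  "ohyama_profile_d2 K a n p x = ohyama_gauge K a n x
     * (gauge_rate a n x * (gauge_rate a n x * poly p (3 * x^2) + 6 * x * poly (pderiv p) (3 * x^2))
        + (- a / x^2 - 27/2 * x^2 - 3 * of_int n) * poly p (3 * x^2)
        + gauge_rate a n x * 6 * x * poly (pderiv p) (3 * x^2)
        + 6 * poly (pderiv p) (3 * x^2) + 36 * x^2 * poly (pderiv (pderiv p)) (3 * x^2))"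

lemma has_real_derivative_poly_3sq:
  "((\<lambda>x. poly p (3 * x^2)) has_real_derivative 6 * x * poly (pderiv p) (3 * x^2)) (at x)"
  by (rule DERIV_cong, rule DERIV_chain2[OF poly_DERIV], (rule derivative_intros)+) (simp add: algebra_simps)

lemma has_real_derivative_ohyama_profile:
  assumes "x > 0"
  shows "(ohyama_profile K a n p has_real_derivative ohyama_profile_d1 K a n p x) (at x)"
  unfolding ohyama_profile_def[abs_def] ohyama_profile_d1_def
  by (rule DERIV_cong, rule DERIV_mult[OF has_real_derivative_ohyama_gauge[OF assms] has_real_derivative_poly_3sq])
     (simp add: algebra_simps)

lemma has_real_derivative_ohyama_profile_d1:
  assumes "x > 0"
  shows "(ohyama_profile_d1 K a n p has_real_derivative ohyama_profile_d2 K a n p x) (at x)"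
proof -
  have d: "((\<lambda>x. 6 * x * poly (pderiv p) (3 * x^2)) has_real_derivative
      6 * poly (pderiv p) (3 * x^2) + 36 * x^2 * poly (pderiv (pderiv p)) (3 * x^2)) (at x)"
    by (rule DERIV_cong, (rule derivative_intros has_real_derivative_poly_3sq)+)
       (simp add: algebra_simps power2_eq_square)
  show ?thesis
    unfolding ohyama_profile_d1_def[abs_def] ohyama_profile_d2_def
    by (rule DERIV_cong, (rule derivative_intros has_real_derivative_ohyama_gauge has_real_derivative_gauge_rate
          has_real_derivative_poly_3sq d assms)+)
       (simp add: algebra_simps)
qed

lemma ohyama_profile_bracket:
  assumes "x > 0"
  shows "x * ((ohyama_profile_d1 K a n p x)^2 - ohyama_profile K a n p x * ohyama_profile_d2 K a n p x)
           - ohyama_profile K a n p x * ohyama_profile_d1 K a n p x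
         = 6 * x * (ohyama_gauge K a n x)^2 * poly (ohyama_lhs n p) (3 * x^2)"
proof -
  define E r r1 r2 where "E = ohyama_gauge K a n x" and "r = poly p (3 * x^2)"
    and "r1 = poly (pderiv p) (3 * x^2)" and "r2 = poly (pderiv (pderiv p)) (3 * x^2)"
  have "x \<noteq> 0" using assms by simp
  then show ?thesis
    unfolding ohyama_profile_def ohyama_profile_d1_def ohyama_profile_d2_def poly_ohyama_lhs gauge_rate_def
      E_def[symmetric] r_def[symmetric] r1_def[symmetric] r2_def[symmetric]
    by (simp add: field_simps power2_eq_square eval_nat_numeral)
qed

definition sigma_const :: "int \<Rightarrow> real" where
  "sigma_const n = (if odd n then 3 powr (1/4) else 1)"

definition sigma_exponent :: "int \<Rightarrow> real" where
  "sigma_exponent n = (if odd n then 7/24 else -5/24)"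

definition ohyama_sigma :: "int \<Rightarrow> real \<Rightarrow> real" where
  "ohyama_sigma n = (\<lambda>z. ohyama_profile (sigma_const n) (sigma_exponent n) n (ohyama n) (cbrt_half z))"

lemma ohyama_gauge_recurrence:
  assumes x: "x > 0"
  shows "ohyama_gauge (sigma_const (n + 1)) (sigma_exponent (n + 1)) (n + 1) x
           * ohyama_gauge (sigma_const (n - 1)) (sigma_exponent (n - 1)) (n - 1) x
         = sqrt 3 * (ohyama_gauge (sigma_const n) (sigma_exponent n) n x)^2
           * (if odd n then 1 else 3 * x^2) / (3 * x)"
proof -
  define u v w where "u = x powr (-5/24)" and "v = x powr (7/24)" and "w = (3::real) powr (1/4)"
  define e e1 e2 where "e = exp (- 9/8 * x^4 - 3/2 * of_int n * x^2)"
    and "e1 = exp (- 9/8 * x^4 - 3/2 * of_int (n + 1) * x^2)"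
    and "e2 = exp (- 9/8 * x^4 - 3/2 * of_int (n - 1) * x^2)"
  have vv: "v * v = x * (u * u)"
  proof -
    have "v * v = x powr (1 + (-5/24) + (-5/24))" unfolding v_def powr_add[symmetric] by simp
    then show ?thesis using x unfolding u_def powr_add by simp
  qed
  have ww: "w * w = sqrt 3"
    unfolding w_def powr_add[symmetric] by (simp add: powr_half_sqrt)
  have ee: "e1 * e2 = e * e"
    unfolding e_def e1_def e2_def exp_add[symmetric] by (simp add: field_simps)
  have G: "ohyama_gauge (sigma_const k) (sigma_exponent k) k x
      = (if odd k then w * v else u) * exp (- 9/8 * x^4 - 3/2 * of_int k * x^2)" for k
    by (simp add: ohyama_gauge_def sigma_const_def sigma_exponent_def u_def v_def w_def)
  have "sqrt 3 * sqrt 3 = (3::real)" by simp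
  then show ?thesis
    using x ww vv ee unfolding G e_def[symmetric] e1_def[symmetric] e2_def[symmetric]
    by (cases "odd n") (simp_all add: field_simps power2_eq_square)
qed

lemma ohyama_sigma_recurrence:
  assumes z: "z > 0"
  shows "ohyama_sigma (n + 1) z * ohyama_sigma (n - 1) z = sqrt 3 * toda_bracket (ohyama_sigma n) z"
proof -
  define x where "x = cbrt_half z"
  have x: "x > 0" unfolding x_def by (rule cbrt_half_pos[OF z])
  define E where "E = ohyama_gauge (sigma_const n) (sigma_exponent n) n x"
  define c where "c = (if odd n then 1 else 3 * x^2)"
  define r where "r = (\<lambda>k. poly (ohyama k) (3 * x^2))"
  have "toda_bracket (ohyama_sigma n) z = 6 * x * E^2 * poly (ohyama_lhs n (ohyama n)) (3 * x^2) / (18 * x^2)"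
    using toda_bracket_cbrt_half[of "ohyama_profile (sigma_const n) (sigma_exponent n) n (ohyama n)",
        OF has_real_derivative_ohyama_profile has_real_derivative_ohyama_profile_d1 z]
    unfolding ohyama_sigma_def x_def[symmetric] E_def ohyama_profile_bracket[OF x] .
  also have "\<dots> = E^2 * c * r (n + 1) * r (n - 1) / (3 * x)"
    unfolding ohyama_toda c_def r_def using x by (simp add: field_simps power2_eq_square)
  finally have B: "toda_bracket (ohyama_sigma n) z = E^2 * c * r (n + 1) * r (n - 1) / (3 * x)" .
  have "ohyama_sigma (n + 1) z * ohyama_sigma (n - 1) z
      = ohyama_gauge (sigma_const (n + 1)) (sigma_exponent (n + 1)) (n + 1) x
        * ohyama_gauge (sigma_const (n - 1)) (sigma_exponent (n - 1)) (n - 1) x * (r (n + 1) * r (n - 1))"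
    unfolding ohyama_sigma_def ohyama_profile_def x_def[symmetric] r_def by (simp add: algebra_simps)
  also have "\<dots> = sqrt 3 * (E^2 * c * r (n + 1) * r (n - 1) / (3 * x))"
    unfolding ohyama_gauge_recurrence[OF x] E_def[symmetric] c_def[symmetric] by (simp add: field_simps)
  finally show ?thesis unfolding B .
qed

lemma ohyama_sigma_eq:
  "ohyama_sigma n z = (let \<zeta> = (z/2) powr (1/3) in
      (if odd n
       then 3 powr (1/4) * \<zeta> powr (7/24)
              * exp (- 9/8 * \<zeta>^4 - 3/2 * of_int n * \<zeta>^2) * poly (ohyama n) (3 * \<zeta>^2)
       else \<zeta> powr (-5/24)
              * exp (- 9/8 * \<zeta>^4 - 3/2 * of_int n * \<zeta>^2) * poly (ohyama n) (3 * \<zeta>^2)))"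
  unfolding ohyama_sigma_def ohyama_profile_def ohyama_gauge_def cbrt_half_def sigma_const_def
    sigma_exponent_def Let_def by simp

lemma isCont_ohyama_sigma: "z > 0 \<Longrightarrow> isCont (ohyama_sigma n) z"
  unfolding ohyama_sigma_def
  using DERIV_chain2[OF has_real_derivative_ohyama_profile[OF cbrt_half_pos] has_real_derivative_cbrt_half]
  by (metis DERIV_isCont)

lemma ohyama_sigma_zeros_finite: "finite {z. z > 0 \<and> ohyama_sigma n z = 0}"
proof (rule finite_subset)
  show "{z. z > 0 \<and> ohyama_sigma n z = 0} \<subseteq> (\<lambda>s. 2 * sqrt (s / 3) ^ 3) ` {s. poly (ohyama n) s = 0}"
  proof
    fix z assume "z \<in> {z. z > 0 \<and> ohyama_sigma n z = 0}"
    then have z: "z > 0" and "ohyama_sigma n z = 0" by auto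
    moreover have "ohyama_gauge (sigma_const n) (sigma_exponent n) n (cbrt_half z) \<noteq> 0"
      using cbrt_half_pos[OF z] by (simp add: ohyama_gauge_def sigma_const_def)
    ultimately have "poly (ohyama n) (3 * (cbrt_half z)^2) = 0"
      by (simp add: ohyama_sigma_def ohyama_profile_def)
    moreover have "z = 2 * sqrt (3 * (cbrt_half z)^2 / 3) ^ 3"
      using cbrt_half_pos[OF z] cbrt_half_cube[OF z] by simp
    ultimately show "z \<in> (\<lambda>s. 2 * sqrt (s / 3) ^ 3) ` {s. poly (ohyama n) s = 0}" by blast
  qed
  show "finite ((\<lambda>s. 2 * sqrt (s / 3) ^ 3) ` {s. poly (ohyama n) s = 0})"
  proof -
    have "ohyama n \<noteq> 0" using ohyama_poly_0[of n] by auto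
    then show ?thesis using poly_roots_finite by blast
  qed
qed

section \<open>Uniqueness\<close>

lemma eq_if_eq_off_finite:
  fixes f g :: "real \<Rightarrow> real"
  assumes "finite Z" "z > 0" "\<And>y. y > 0 \<Longrightarrow> y \<notin> Z \<Longrightarrow> f y = g y" "isCont f z" "isCont g z"
  shows "f z = g z"
proof -
  have "eventually (\<lambda>y. y \<notin> Z) (at z)"
    using islimpt_finite[OF assms(1)] islimpt_iff_eventually by blast
  moreover have "eventually (\<lambda>y. y > 0) (at z)"
    using order_tendstoD(1)[OF tendsto_ident_at assms(2)] .
  ultimately have "eventually (\<lambda>y. f y = g y) (at z)"
    by eventually_elim (use assms(3) in auto)
  then have "(g \<longlongrightarrow> f z) (at z)"
    using assms(4) tendsto_cong unfolding isCont_def by fastforce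
  with assms(5) show ?thesis unfolding isCont_def using LIM_unique by blast
qed

lemma deriv_cong_pos:
  assumes "\<And>y. y > 0 \<Longrightarrow> f y = g y" "z > (0::real)"
  shows "deriv f z = deriv g z"
proof (rule deriv_cong_ev)
  have "eventually (\<lambda>y. y \<in> {0<..}) (nhds z)"
    using assms(2) by (intro eventually_nhds_in_open) auto
  then show "eventually (\<lambda>y. f y = g y) (nhds z)"
    by eventually_elim (use assms(1) in auto)
qed simp

lemma toda_bracket_cong_pos:
  assumes "\<And>y. y > 0 \<Longrightarrow> f y = g y" "z > 0"
  shows "toda_bracket f z = toda_bracket g z"
proof -
  have "deriv f y = deriv g y" if "y > 0" for y using deriv_cong_pos[OF assms(1) that] .
  then have "deriv (deriv f) z = deriv (deriv g) z" using deriv_cong_pos assms(2) by blast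
  then show ?thesis
    unfolding toda_bracket_def using assms deriv_cong_pos[OF assms(1,2)] by simp
qed

lemma toda_recurrence_unique:
  fixes \<sigma> \<tau> :: "int \<Rightarrow> real \<Rightarrow> real"
  assumes \<sigma>_cont: "\<And>n z. z > 0 \<Longrightarrow> isCont (\<sigma> n) z" and \<tau>_cont: "\<And>n z. z > 0 \<Longrightarrow> isCont (\<tau> n) z"
    and \<sigma>_rec: "\<And>n z. z > 0 \<Longrightarrow> \<sigma> (n + 1) z * \<sigma> (n - 1) z = c * toda_bracket (\<sigma> n) z"
    and \<tau>_rec: "\<And>n z. z > 0 \<Longrightarrow> \<tau> (n + 1) z * \<tau> (n - 1) z = c * toda_bracket (\<tau> n) z"
    and zeros: "\<And>n. finite {z. z > 0 \<and> \<tau> n z = 0}"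
    and init: "\<And>z. z > 0 \<Longrightarrow> \<sigma> 0 z = \<tau> 0 z" "\<And>z. z > 0 \<Longrightarrow> \<sigma> 1 z = \<tau> 1 z"
    and z: "z > 0"
  shows "\<sigma> n z = \<tau> n z"
proof -
  define S where "S n \<longleftrightarrow> (\<forall>z>0. \<sigma> n z = \<tau> n z)" for n
  have step: "S k" if Sn: "S n" and Sm: "S m"
    and km: "(k = n + 1 \<and> m = n - 1) \<or> (k = n - 1 \<and> m = n + 1)" for n m k
    unfolding S_def
  proof (intro allI impI)
    fix z :: real assume z: "z > 0"
    have prod: "\<sigma> k y * \<sigma> m y = \<tau> k y * \<tau> m y" if y: "y > 0" for y
    proof -
      have "\<sigma> k y * \<sigma> m y = c * toda_bracket (\<sigma> n) y"
        using \<sigma>_rec[OF y, of n] km by (auto simp: mult.commute)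
      also have "\<dots> = c * toda_bracket (\<tau> n) y"
        using toda_bracket_cong_pos[of "\<sigma> n" "\<tau> n", OF _ y] Sn unfolding S_def by simp
      also have "\<dots> = \<tau> k y * \<tau> m y"
        using \<tau>_rec[OF y, of n] km by (auto simp: mult.commute)
      finally show ?thesis .
    qed
    show "\<sigma> k z = \<tau> k z"
    proof (rule eq_if_eq_off_finite[OF zeros[of m] z _ \<sigma>_cont[OF z] \<tau>_cont[OF z]])
      fix y assume "y > 0" "y \<notin> {z. z > 0 \<and> \<tau> m z = 0}"
      then show "\<sigma> k y = \<tau> k y" using prod[of y] Sm unfolding S_def by auto
    qed
  qed
  have "S n \<and> S (n + 1)"
  proof (induction n rule: int_induct[where k = 0])
    case base
    show ?case using init unfolding S_def by simp
  next
    case (step1 i)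
    then show ?case using step[of "i + 1" i "i + 2"] by (simp add: add.assoc)
  next
    case (step2 i)
    then show ?case using step[of i "i + 1" "i - 1"] by simp
  qed
  then show ?thesis using z unfolding S_def by blast
qed

theorem mainTheorem7:
  fixes \<sigma> :: "int \<Rightarrow> real \<Rightarrow> real"
  assumes diff: "\<And>n z. z > 0 \<Longrightarrow> \<sigma> n differentiable (at z)"
      and diff2: "\<And>n z. z > 0 \<Longrightarrow> deriv (\<sigma> n) differentiable (at z)"
      and rec: "\<And>n z. z > 0 \<Longrightarrow>
        \<sigma> (n + 1) z * \<sigma> (n - 1) z =
          sqrt 3 * (z * ((deriv (\<sigma> n) z)^2 - \<sigma> n z * deriv (deriv (\<sigma> n)) z)
                    - \<sigma> n z * deriv (\<sigma> n) z)"
      and init0: "\<And>z. z > 0 \<Longrightarrow>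
        \<sigma> 0 z = ((z/2) powr (1/3)) powr (-5/24) * exp (- 9/8 * ((z/2) powr (1/3))^4)"
      and init1: "\<And>z. z > 0 \<Longrightarrow>
        \<sigma> 1 z = 3 powr (1/4) * ((z/2) powr (1/3)) powr (7/24)
                  * exp (- 9/8 * ((z/2) powr (1/3))^4 - 3/2 * ((z/2) powr (1/3))^2)"
  shows "\<And>n z. z > 0 \<Longrightarrow>
    \<sigma> n z = (let \<zeta> = (z/2) powr (1/3) in
      (if odd n
       then 3 powr (1/4) * \<zeta> powr (7/24)
              * exp (- 9/8 * \<zeta>^4 - 3/2 * of_int n * \<zeta>^2) * poly (ohyama n) (3 * \<zeta>^2)
       else \<zeta> powr (-5/24)
              * exp (- 9/8 * \<zeta>^4 - 3/2 * of_int n * \<zeta>^2) * poly (ohyama n) (3 * \<zeta>^2)))"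
proof -
  have ohyama_0_1: "ohyama 0 = 1" "ohyama 1 = 1" by (simp_all add: ohyama_def)
  have \<sigma>_eq: "\<sigma> n z = ohyama_sigma n z" if z: "z > 0" for n z
  proof (rule toda_recurrence_unique[OF _ isCont_ohyama_sigma _ ohyama_sigma_recurrence
        ohyama_sigma_zeros_finite _ _ z])
    show "isCont (\<sigma> n) z" if "z > 0" for n z
      using differentiable_imp_continuous_within[OF diff[OF that]] by (simp add: continuous_within)
    show "\<sigma> (n + 1) z * \<sigma> (n - 1) z = sqrt 3 * toda_bracket (\<sigma> n) z" if "z > 0" for n z
      using rec[OF that] unfolding toda_bracket_def .
    show "\<sigma> 0 z = ohyama_sigma 0 z" "\<sigma> 1 z = ohyama_sigma 1 z" if "z > 0" for z
      using init0[OF that] init1[OF that] by (simp_all add: ohyama_sigma_eq ohyama_0_1 Let_def)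
  qed
  show "?thesis n z" if "z > 0" for n z
    using \<sigma>_eq[OF that] unfolding ohyama_sigma_eq .
qed

end
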